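(* Let $E,F$ be Banach lattices and let $S,T:E\to F$ be operators with $0\le S\le T$. If $T$ is limitedly L-weakly compact, then $S$ is limitedly L-weakly compact.
   Context: All vector spaces are real and operators are linear and bounded. $S\le T$ means $T-S$ is a positive operator. For a subset $A$ of a Banach lattice $F$, $\mathrm{sol}(A)=\bigcup_{a\in A}[-|a|,|a|]$. A subset $A\subseteq F$ is an Lwc-set if every disjoint sequence in $\mathrm{sol}(A)$ is norm-null. A bounded subset $A$ of a Banach space $X$ is limited if every weak$^\ast$-null sequence in $X'$ converges to $0$ uniformly on $A$. An operator $T:X\to F$ is limitedly L-weakly compact if $T$ maps every limited subset of $X$ onto an Lwc-subset of $F$. *)

theory Defs
  imports "HOL-Analysis.Analysis"
begin

definition lat_abs :: "'a::{lattice, uminus} \<Rightarrow> 'a" where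
  "lat_abs x = sup x (- x)"

class banach_lattice = banach + ordered_real_vector + lattice +
  assumes lattice_norm: "sup x (- x) \<le> sup y (- y) \<Longrightarrow> norm x \<le> norm y"

definition positive_op :: "('a::banach_lattice \<Rightarrow> 'b::banach_lattice) \<Rightarrow> bool" where
  "positive_op T \<longleftrightarrow> (\<forall>x. 0 \<le> x \<longrightarrow> 0 \<le> T x)"

definition sol :: "'a::banach_lattice set \<Rightarrow> 'a set" where
  "sol A = (\<Union>a\<in>A. {y. - lat_abs a \<le> y \<and> y \<le> lat_abs a})"

definition disjoint_seq :: "(nat \<Rightarrow> 'a::banach_lattice) \<Rightarrow> bool" where
  "disjoint_seq x \<longleftrightarrow> (\<forall>n m. n \<noteq> m \<longrightarrow> inf (lat_abs (x n)) (lat_abs (x m)) = 0)"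

definition lwc_set :: "'a::banach_lattice set \<Rightarrow> bool" where
  "lwc_set A \<longleftrightarrow> (\<forall>x. (\<forall>n. x n \<in> sol A) \<and> disjoint_seq x \<longrightarrow> (\<lambda>n. norm (x n)) \<longlonglongrightarrow> 0)"

definition weak_star_null :: "(nat \<Rightarrow> 'a::real_normed_vector \<Rightarrow> real) \<Rightarrow> bool" where
  "weak_star_null f \<longleftrightarrow> (\<forall>n. bounded_linear (f n)) \<and> (\<forall>x. (\<lambda>n. f n x) \<longlonglongrightarrow> 0)"

definition limited_set :: "'a::real_normed_vector set \<Rightarrow> bool" where
  "limited_set A \<longleftrightarrow> bounded A \<and>
     (\<forall>f. weak_star_null f \<longrightarrow>
        (\<forall>e>0. \<exists>N. \<forall>n\<ge>N. \<forall>a\<in>A. \<bar>f n a\<bar> < e))"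

definition limitedly_L_weakly_compact :: "('a::banach_lattice \<Rightarrow> 'b::banach_lattice) \<Rightarrow> bool" where
  "limitedly_L_weakly_compact T \<longleftrightarrow> (\<forall>A. limited_set A \<longrightarrow> lwc_set (T ` A))"

end

theory Submission
  imports Defs "HOL-Library.Lattice_Algebras"
begin

(* Let x_n be a disjoint sequence in sol (S A) with A limited, and y_n = |x_n| <= |S a_n| with
   a_n in A. The functional w |-> sup_{k>0} ||inf(|w|, k y_n)|| is sublinear, so Hahn-Banach gives
   linear functionals phi_n dominated by it with phi_n (S a_n) >= ||x_n||. For fixed e we have
   |S e| <= T |e|, and the truncations inf(|S e|, k_n y_n) form a disjoint sequence in
   sol {T |e|}, an Lwc-set because {|e|} is limited; hence phi_n o S is weak*-null. As A is
   limited, phi_n o S tends to 0 uniformly on A, which forces ||x_n|| <= phi_n (S a_n) -> 0. *)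

section \<open>Hahn-Banach for sublinear functionals\<close>

definition sublinear :: "('a::real_vector \<Rightarrow> real) \<Rightarrow> bool" where
  "sublinear p \<longleftrightarrow>
     (\<forall>x y. p (x + y) \<le> p x + p y) \<and> (\<forall>c x. 0 < c \<longrightarrow> p (c *\<^sub>R x) = c * p x)"

lemma sublinear_add: "sublinear p \<Longrightarrow> p (x + y) \<le> p x + p y"
  unfolding sublinear_def by blast

lemma sublinear_scaleR: "sublinear p \<Longrightarrow> 0 < c \<Longrightarrow> p (c *\<^sub>R x) = c * p x"
  unfolding sublinear_def by blast

lemma sublinear_zero: "sublinear p \<Longrightarrow> p 0 = 0"
  using sublinear_scaleR[of p 2 0] by simp

lemma sublinear_minus_le: "sublinear p \<Longrightarrow> - p (- x) \<le> p x"
  using sublinear_add[of p x "- x"] sublinear_zero[of p] by simp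

(* Partial linear functionals are encoded by their graphs, i.e. subspaces of 'a \<times> real;
   domination by p is the inclusion in {(x, a). a \<le> p x}, which already forces a graph. *)
lemma dominated_line_extension:
  fixes p :: "'a::real_vector \<Rightarrow> real"
  assumes p: "sublinear p" and G: "subspace G" and dom: "G \<subseteq> {(x, a). a \<le> p x}"
    and lower: "\<And>y b. (y, b) \<in> G \<Longrightarrow> b - p (y - x1) \<le> c"
    and upper: "\<And>x a. (x, a) \<in> G \<Longrightarrow> c \<le> p (x + x1) - a"
  shows "span (insert (x1, c) G) \<subseteq> {(x, a). a \<le> p x}"
proof -
  have key: "a + t * c \<le> p (x + t *\<^sub>R x1)" if "(x, a) \<in> G" for x a t
  proof -
    have scaled: "(s *\<^sub>R x, s * a) \<in> G" for s
      using subspace_scale[OF G that, of s] by simp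
    consider "0 < t" | "t = 0" | "t < 0" by linarith
    then show ?thesis
    proof cases
      case 1
      from mult_left_mono[OF upper[OF scaled[of "1 / t"]], of t]
      have "t * c \<le> t * p ((1 / t) *\<^sub>R x + x1) - a"
        using 1 by (simp add: right_diff_distrib)
      also have "t * p ((1 / t) *\<^sub>R x + x1) = p (x + t *\<^sub>R x1)"
        using sublinear_scaleR[OF p 1, of "(1 / t) *\<^sub>R x + x1"] 1 by (simp add: algebra_simps)
      finally show ?thesis by simp
    next
      case 2
      then show ?thesis using dom that by auto
    next
      case 3
      from mult_left_mono[OF lower[OF scaled[of "- 1 / t"]], of "- t"]
      have "a - (- t) * p ((- 1 / t) *\<^sub>R x - x1) \<le> - t * c"
        using 3 by (simp add: right_diff_distrib)
      also have "(- t) * p ((- 1 / t) *\<^sub>R x - x1) = p (x + t *\<^sub>R x1)"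
        using sublinear_scaleR[OF p, of "- t" "(- 1 / t) *\<^sub>R x - x1"] 3 by (simp add: algebra_simps)
      finally show ?thesis by simp
    qed
  qed
  have "a \<le> p x" if xa: "(x, a) \<in> span (insert (x1, c) G)" for x a
  proof -
    obtain t where "(x, a) - t *\<^sub>R (x1, c) \<in> span G"
      using xa span_breakdown_eq by blast
    then have "(x - t *\<^sub>R x1, a - t * c) \<in> G"
      unfolding span_eq_iff[THEN iffD2, OF G] by simp
    from key[OF this, of t] show ?thesis by simp
  qed
  then show ?thesis by auto
qed

lemma dominated_subspace_extend:
  fixes p :: "'a::real_vector \<Rightarrow> real"
  assumes p: "sublinear p" and G: "subspace G" and dom: "G \<subseteq> {(x, a). a \<le> p x}"
  shows "\<exists>c. span (insert (x1, c) G) \<subseteq> {(x, a). a \<le> p x}"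
proof -
  have lower_le_upper: "b - p (y - x1) \<le> p (x + x1) - a" if "(x, a) \<in> G" "(y, b) \<in> G" for x a y b
  proof -
    have "a + b \<le> p (x + y)"
      using dom subspace_add[OF G that] by auto
    also have "\<dots> \<le> p (x + x1) + p (y - x1)"
      using sublinear_add[OF p, of "x + x1" "y - x1"] by simp
    finally show ?thesis by simp
  qed
  define L where "L = {b - p (y - x1) | y b. (y, b) \<in> G}"
  have "(0, 0) \<in> G"
    using subspace_0[OF G] by (simp add: zero_prod_def)
  then have "L \<noteq> {}"
    unfolding L_def by blast
  have "bdd_above L"
    unfolding L_def using lower_le_upper[OF \<open>(0, 0) \<in> G\<close>] by (intro bdd_aboveI[of _ "p x1"]) auto
  have "b - p (y - x1) \<le> Sup L" if "(y, b) \<in> G" for y b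
    by (rule cSup_upper[OF _ \<open>bdd_above L\<close>]) (use that L_def in blast)
  moreover have "Sup L \<le> p (x + x1) - a" if "(x, a) \<in> G" for x a
    by (rule cSup_least[OF \<open>L \<noteq> {}\<close>]) (use that lower_le_upper L_def in blast)
  ultimately show ?thesis
    using dominated_line_extension[OF p G dom] by blast
qed

lemma subspace_Union_chain:
  assumes "\<C> \<noteq> {}" and "\<And>S. S \<in> \<C> \<Longrightarrow> subspace S"
    and chain: "\<And>S T. S \<in> \<C> \<Longrightarrow> T \<in> \<C> \<Longrightarrow> S \<subseteq> T \<or> T \<subseteq> S"
  shows "subspace (\<Union>\<C>)"
  unfolding subspace_def
proof (intro conjI ballI allI)
  show "0 \<in> \<Union>\<C>"
    using assms(1,2) subspace_0 by blast
next
  fix x y assume "x \<in> \<Union>\<C>" "y \<in> \<Union>\<C>"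
  then obtain S T where "S \<in> \<C>" "T \<in> \<C>" "x \<in> S" "y \<in> T" by blast
  with chain[of S T] assms(2) show "x + y \<in> \<Union>\<C>"
    by (metis UnionI subset_iff subspace_add)
next
  fix c x assume "x \<in> \<Union>\<C>"
  then show "c *\<^sub>R x \<in> \<Union>\<C>"
    using assms(2) subspace_scale by blast
qed

lemma dominated_subspace_functional:
  fixes p :: "'a::real_vector \<Rightarrow> real"
  assumes p: "sublinear p" and M: "subspace M" and dom: "M \<subseteq> {(x, a). a \<le> p x}"
    and "(x, a) \<in> M" "(x, b) \<in> M"
  shows "a = b"
proof -
  have "(0, a - b) \<in> M" "(0, b - a) \<in> M"
    using subspace_diff[OF M assms(4,5)] subspace_diff[OF M assms(5,4)] by simp_all
  then have "a - b \<le> p 0" "b - a \<le> p 0"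
    using dom by blast+
  then show ?thesis
    using sublinear_zero[OF p] by simp
qed

lemma subspace_graph_linear:
  fixes M :: "('a::real_vector \<times> 'b::real_vector) set"
  assumes M: "subspace M" and functional: "\<And>x. \<exists>!a. (x, a) \<in> M"
  shows "\<exists>f. linear f \<and> (\<forall>x a. (x, a) \<in> M \<longleftrightarrow> f x = a)"
proof -
  define f where "f x = (THE a. (x, a) \<in> M)" for x
  have graph_mem: "(x, f x) \<in> M" for x
    unfolding f_def by (rule theI'[OF functional])
  have graph: "(x, a) \<in> M \<longleftrightarrow> f x = a" for x a
    using graph_mem functional[of x] by blast
  have "linear f"
  proof (rule linearI)
    fix x y
    have "(x + y, f x + f y) \<in> M"
      using subspace_add[OF M graph_mem graph_mem] by simp
    then show "f (x + y) = f x + f y"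
      using graph by blast
  next
    fix c x
    have "(c *\<^sub>R x, c *\<^sub>R f x) \<in> M"
      using subspace_scale[OF M graph_mem, of c] by simp
    then show "f (c *\<^sub>R x) = c *\<^sub>R f x"
      using graph by blast
  qed
  with graph show ?thesis by blast
qed

lemma dominated_subspace_extends_linear:
  fixes p :: "'a::real_vector \<Rightarrow> real"
  assumes p: "sublinear p" and G: "subspace G" and dom: "G \<subseteq> {(x, a). a \<le> p x}"
  shows "\<exists>f. linear f \<and> (\<forall>x. f x \<le> p x) \<and> (\<forall>(x, a)\<in>G. f x = a)"
proof -
  define \<A> where "\<A> = {H. subspace H \<and> G \<subseteq> H \<and> H \<subseteq> {(x, a). a \<le> p x}}"
  have "\<exists>M\<in>\<A>. \<forall>H\<in>\<A>. M \<subseteq> H \<longrightarrow> H = M"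
  proof (rule subset_Zorn_nonempty)
    show "\<A> \<noteq> {}"
      using G dom unfolding \<A>_def by blast
  next
    fix \<C> assume "\<C> \<noteq> {}" and "subset.chain \<A> \<C>"
    then have "\<C> \<subseteq> \<A>" and chain: "\<And>S T. S \<in> \<C> \<Longrightarrow> T \<in> \<C> \<Longrightarrow> S \<subseteq> T \<or> T \<subseteq> S"
      unfolding subset_chain_def by blast+
    then have "subspace (\<Union>\<C>)"
      using subspace_Union_chain[OF \<open>\<C> \<noteq> {}\<close>] unfolding \<A>_def by blast
    then show "\<Union>\<C> \<in> \<A>"
      using \<open>\<C> \<noteq> {}\<close> \<open>\<C> \<subseteq> \<A>\<close> unfolding \<A>_def by blast
  qed
  then obtain M where "M \<in> \<A>" and maximal: "\<And>H. H \<in> \<A> \<Longrightarrow> M \<subseteq> H \<Longrightarrow> H = M"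
    by blast
  then have "subspace M" "G \<subseteq> M" and dom_M: "M \<subseteq> {(x, a). a \<le> p x}"
    unfolding \<A>_def by blast+
  have total: "\<exists>a. (x, a) \<in> M" for x
  proof -
    obtain c where "span (insert (x, c) M) \<subseteq> {(y, b). b \<le> p y}"
      using dominated_subspace_extend[OF p \<open>subspace M\<close> dom_M] by blast
    moreover have "insert (x, c) M \<subseteq> span (insert (x, c) M)"
      by (rule span_superset)
    ultimately have "span (insert (x, c) M) = M"
      using maximal \<open>G \<subseteq> M\<close> subspace_span unfolding \<A>_def by blast
    then show ?thesis
      using span_base[of "(x, c)" "insert (x, c) M"] by auto
  qed
  have "\<exists>!a. (x, a) \<in> M" for x
    using total dominated_subspace_functional[OF p \<open>subspace M\<close> dom_M] by blast
  then obtain f where "linear f" and graph: "\<And>x a. (x, a) \<in> M \<longleftrightarrow> f x = a"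
    using subspace_graph_linear[OF \<open>subspace M\<close>] by blast
  moreover have "f x \<le> p x" for x
    using dom_M graph[of x "f x"] by blast
  moreover have "f x = a" if "(x, a) \<in> G" for x a
    using that \<open>G \<subseteq> M\<close> graph by blast
  ultimately show ?thesis by blast
qed

lemma sublinear_supporting_linear:
  fixes p :: "'a::real_vector \<Rightarrow> real"
  assumes p: "sublinear p"
  shows "\<exists>f. linear f \<and> (\<forall>x. f x \<le> p x) \<and> f z = p z"
proof -
  have "t * p z \<le> p (t *\<^sub>R z)" for t
  proof (cases t "0 :: real" rule: linorder_cases)
    case less
    have "t * p z \<le> - t * p (- z)"
      using mult_left_mono_neg[OF sublinear_minus_le[OF p, of z], of t] less by simp
    also have "\<dots> = p (t *\<^sub>R z)"
      using sublinear_scaleR[OF p, of "- t" "- z"] less by simp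
    finally show ?thesis .
  next
    case equal
    then show ?thesis using sublinear_zero[OF p] by simp
  next
    case greater
    then show ?thesis using sublinear_scaleR[OF p greater, of z] by simp
  qed
  then have "span {(z, p z)} \<subseteq> {(x, a). a \<le> p x}"
    by (auto simp: span_singleton)
  then obtain f where "linear f" "\<forall>x. f x \<le> p x" "\<forall>(x, a)\<in>span {(z, p z)}. f x = a"
    using dominated_subspace_extends_linear[OF p subspace_span] by blast
  moreover have "(z, p z) \<in> span {(z, p z)}"
    by (rule span_base) simp
  ultimately show ?thesis by auto
qed

section \<open>Vector lattices\<close>

context banach_lattice
begin

subclass lattice_ab_group_add ..

end

lemma le_lat_abs: "x \<le> lat_abs x" and minus_le_lat_abs: "- x \<le> lat_abs x"
  unfolding lat_abs_def by simp_all

lemma lat_abs_nonneg: "0 \<le> lat_abs (x :: 'a::lattice_ab_group_add)"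
proof -
  have "x + - x \<le> lat_abs x + lat_abs x"
    by (intro add_mono le_lat_abs minus_le_lat_abs)
  then show ?thesis by simp
qed

lemma lat_abs_of_nonneg: "0 \<le> x \<Longrightarrow> lat_abs (x :: 'a::lattice_ab_group_add) = x"
  unfolding lat_abs_def by (simp add: sup_absorb1 minus_le_self_iff)

lemma lat_abs_lat_abs [simp]: "lat_abs (lat_abs (x :: 'a::lattice_ab_group_add)) = lat_abs x"
  by (rule lat_abs_of_nonneg[OF lat_abs_nonneg])

lemma lat_abs_minus [simp]: "lat_abs (- (x :: 'a::lattice_ab_group_add)) = lat_abs x"
  unfolding lat_abs_def by (simp add: sup_commute)

lemma lat_abs_le_iff: "lat_abs x \<le> y \<longleftrightarrow> x \<le> y \<and> - x \<le> y"
  unfolding lat_abs_def by simp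

lemma lat_abs_add_le: "lat_abs (a + b) \<le> lat_abs a + lat_abs (b :: 'a::lattice_ab_group_add)"
  unfolding lat_abs_le_iff minus_add_distrib
  by (intro conjI add_mono le_lat_abs minus_le_lat_abs)

lemma inf_add_le_add_inf:
  fixes u a b :: "'a::lattice_ab_group_add"
  assumes "0 \<le> u" "0 \<le> a" "0 \<le> b"
  shows "inf u (a + b) \<le> inf u a + inf u b"
proof -
  have "inf u a + inf u b = inf (inf (u + u) (a + u)) (inf (u + b) (a + b))"
    by (simp only: add_inf_distrib_left add_inf_distrib_right)
  moreover have "inf u (a + b) \<le> inf (inf (u + u) (a + u)) (inf (u + b) (a + b))"
    using assms by (intro le_infI; meson inf.coboundedI1 inf.coboundedI2 order_refl
        add_increasing add_increasing2)
  ultimately show ?thesis by simp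
qed

lemma scaleR_inf:
  fixes a b :: "'a::{ordered_real_vector, lattice}"
  assumes "0 < c"
  shows "c *\<^sub>R inf a b = inf (c *\<^sub>R a) (c *\<^sub>R b)"
proof (rule antisym)
  show "c *\<^sub>R inf a b \<le> inf (c *\<^sub>R a) (c *\<^sub>R b)"
    using assms by (simp add: scaleR_le_cancel_left_pos)
  have "inf (c *\<^sub>R a) (c *\<^sub>R b) /\<^sub>R c \<le> inf a b"
    using assms by (simp add: pos_divideR_le_eq le_infI1 le_infI2)
  then show "inf (c *\<^sub>R a) (c *\<^sub>R b) \<le> c *\<^sub>R inf a b"
    by (simp only: pos_divideR_le_eq[OF assms])
qed

lemma scaleR_sup:
  fixes a b :: "'a::{ordered_real_vector, lattice}"
  assumes "0 < c"
  shows "c *\<^sub>R sup a b = sup (c *\<^sub>R a) (c *\<^sub>R b)"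
proof (rule antisym)
  show "sup (c *\<^sub>R a) (c *\<^sub>R b) \<le> c *\<^sub>R sup a b"
    using assms by (simp add: scaleR_le_cancel_left_pos)
  have "sup a b \<le> sup (c *\<^sub>R a) (c *\<^sub>R b) /\<^sub>R c"
    using assms by (simp add: pos_le_divideR_eq le_supI1 le_supI2)
  then show "c *\<^sub>R sup a b \<le> sup (c *\<^sub>R a) (c *\<^sub>R b)"
    by (simp only: pos_le_divideR_eq[OF assms])
qed

lemma lat_abs_scaleR:
  "0 < c \<Longrightarrow> lat_abs (c *\<^sub>R x) = c *\<^sub>R lat_abs (x :: 'a::{ordered_real_vector, lattice})"
  unfolding lat_abs_def by (simp add: scaleR_sup)

lemma inf_eq_0_if_le_scaleR:
  fixes a b u v :: "'a::{ordered_real_vector, lattice}"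
  assumes "inf a b = 0" "0 \<le> a" "0 \<le> b" "0 \<le> u" "0 \<le> v"
    and "u \<le> s *\<^sub>R a" "v \<le> t *\<^sub>R b" "0 < s" "0 < t"
  shows "inf u v = 0"
proof (rule antisym)
  have "s *\<^sub>R a \<le> (s + t) *\<^sub>R a" "t *\<^sub>R b \<le> (s + t) *\<^sub>R b"
    using assms by (auto intro!: scaleR_right_mono)
  then have "u \<le> (s + t) *\<^sub>R a" "v \<le> (s + t) *\<^sub>R b"
    using assms order_trans by blast+
  then have "inf u v \<le> inf ((s + t) *\<^sub>R a) ((s + t) *\<^sub>R b)"
    by (rule inf_mono)
  also have "\<dots> = 0"
    using assms by (simp flip: scaleR_inf)
  finally show "inf u v \<le> 0" .
  show "0 \<le> inf u v"
    using assms by simp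
qed

lemma norm_le_if_lat_abs_le: "lat_abs x \<le> lat_abs y \<Longrightarrow> norm x \<le> norm (y :: 'a::banach_lattice)"
  unfolding lat_abs_def by (rule lattice_norm)

lemma norm_lat_abs [simp]: "norm (lat_abs (x :: 'a::banach_lattice)) = norm x"
  by (intro antisym norm_le_if_lat_abs_le) simp_all

lemma norm_mono_nonneg: "0 \<le> x \<Longrightarrow> x \<le> y \<Longrightarrow> norm x \<le> norm (y :: 'a::banach_lattice)"
  by (rule norm_le_if_lat_abs_le) (simp add: lat_abs_of_nonneg)

section \<open>A band seminorm\<close>

(* It sees |w| only through the ideal generated by y: it vanishes when w is disjoint from y. *)
definition band_norm :: "'a::banach_lattice \<Rightarrow> 'a \<Rightarrow> real" where
  "band_norm y w = (SUP k\<in>{0<..}. norm (inf (lat_abs w) (k *\<^sub>R y)))"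

lemma norm_inf_scaleR_le_norm:
  assumes "0 \<le> y" "0 < k"
  shows "norm (inf (lat_abs w) (k *\<^sub>R y)) \<le> norm (w :: 'a::banach_lattice)"
  using norm_mono_nonneg[of "inf (lat_abs w) (k *\<^sub>R y)" "lat_abs w"] assms
  by (simp add: lat_abs_nonneg scaleR_nonneg_nonneg)

lemma bdd_above_norm_inf_scaleR:
  "0 \<le> (y :: 'a::banach_lattice) \<Longrightarrow> bdd_above ((\<lambda>k. norm (inf (lat_abs w) (k *\<^sub>R y))) ` {0<..})"
  by (rule bdd_aboveI2[where M = "norm w"]) (simp add: norm_inf_scaleR_le_norm)

lemma norm_inf_le_band_norm:
  assumes "0 \<le> y" "0 < k"
  shows "norm (inf (lat_abs w) (k *\<^sub>R y)) \<le> band_norm y w"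
  unfolding band_norm_def
  by (rule cSUP_upper[OF _ bdd_above_norm_inf_scaleR[OF \<open>0 \<le> y\<close>]]) (use assms in simp)

lemma band_norm_nonneg: "0 \<le> y \<Longrightarrow> 0 \<le> band_norm y w"
  by (rule order_trans[OF norm_ge_zero norm_inf_le_band_norm[OF _ zero_less_one]])

lemma band_norm_le:
  "(\<And>k. 0 < k \<Longrightarrow> norm (inf (lat_abs w) (k *\<^sub>R y)) \<le> B) \<Longrightarrow> band_norm y w \<le> B"
  unfolding band_norm_def by (rule cSUP_least) auto

lemma band_norm_le_norm: "0 \<le> y \<Longrightarrow> band_norm y w \<le> norm w"
  by (rule band_norm_le) (rule norm_inf_scaleR_le_norm)

lemma band_norm_minus [simp]: "band_norm y (- w) = band_norm y w"
  unfolding band_norm_def by simp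

lemma norm_le_band_norm:
  assumes "0 \<le> y" "y \<le> lat_abs w"
  shows "norm y \<le> band_norm y w"
  using norm_inf_le_band_norm[OF \<open>0 \<le> y\<close>, of 1 w] assms(2) by (simp add: inf_absorb2)

lemma band_norm_nearly_attained:
  assumes "0 \<le> y"
  shows "\<exists>k>0. band_norm y w \<le> 2 * norm (inf (lat_abs w) (k *\<^sub>R y))"
proof (cases "band_norm y w \<le> 0")
  case True
  then have "band_norm y w \<le> 2 * norm (inf (lat_abs w) (1 *\<^sub>R y))"
    using norm_ge_zero[of "inf (lat_abs w) (1 *\<^sub>R y)"] by linarith
  then show ?thesis
    by (intro exI[of _ 1]) simp
next
  case False
  have "a < band_norm y w \<longleftrightarrow> (\<exists>k\<in>{0<..}. a < norm (inf (lat_abs w) (k *\<^sub>R y)))" for a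
    unfolding band_norm_def
    by (rule less_cSUP_iff[OF _ bdd_above_norm_inf_scaleR[OF assms]]) auto
  moreover have "band_norm y w / 2 < band_norm y w"
    using False by linarith
  ultimately obtain k where "0 < k" "band_norm y w / 2 < norm (inf (lat_abs w) (k *\<^sub>R y))"
    by auto
  then show ?thesis
    by (intro exI[of _ k] conjI) linarith+
qed

lemma norm_inf_lat_abs_scaleR:
  fixes y w :: "'a::banach_lattice"
  assumes "0 < c"
  shows "norm (inf (lat_abs (c *\<^sub>R w)) (k *\<^sub>R y)) = c * norm (inf (lat_abs w) ((k / c) *\<^sub>R y))"
proof -
  have "inf (lat_abs (c *\<^sub>R w)) (k *\<^sub>R y) = c *\<^sub>R inf (lat_abs w) ((k / c) *\<^sub>R y)"
    using assms by (simp add: lat_abs_scaleR scaleR_inf)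
  then show ?thesis
    using assms by simp
qed

lemma sublinear_band_norm:
  assumes y: "0 \<le> (y :: 'a::banach_lattice)"
  shows "sublinear (band_norm y)"
  unfolding sublinear_def
proof (intro conjI allI impI)
  fix w1 w2 :: 'a
  show "band_norm y (w1 + w2) \<le> band_norm y w1 + band_norm y w2"
  proof (rule band_norm_le)
    fix k :: real assume k: "0 < k"
    have ky: "0 \<le> k *\<^sub>R y"
      using k y by (simp add: scaleR_nonneg_nonneg)
    have "inf (lat_abs (w1 + w2)) (k *\<^sub>R y) \<le> inf (k *\<^sub>R y) (lat_abs w1 + lat_abs w2)"
      using inf_mono[OF lat_abs_add_le order_refl] by (simp add: inf_commute)
    also have "\<dots> \<le> inf (lat_abs w1) (k *\<^sub>R y) + inf (lat_abs w2) (k *\<^sub>R y)"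
      using inf_add_le_add_inf[OF ky lat_abs_nonneg lat_abs_nonneg] by (simp add: inf_commute)
    finally have "norm (inf (lat_abs (w1 + w2)) (k *\<^sub>R y))
        \<le> norm (inf (lat_abs w1) (k *\<^sub>R y) + inf (lat_abs w2) (k *\<^sub>R y))"
      using ky by (intro norm_mono_nonneg) (simp_all add: lat_abs_nonneg)
    also have "\<dots> \<le> norm (inf (lat_abs w1) (k *\<^sub>R y)) + norm (inf (lat_abs w2) (k *\<^sub>R y))"
      by (rule norm_triangle_ineq)
    also have "\<dots> \<le> band_norm y w1 + band_norm y w2"
      by (intro add_mono norm_inf_le_band_norm[OF y k])
    finally show "norm (inf (lat_abs (w1 + w2)) (k *\<^sub>R y)) \<le> band_norm y w1 + band_norm y w2" .
  qed
next
  fix c :: real and w :: 'a assume c: "0 < c"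
  show "band_norm y (c *\<^sub>R w) = c * band_norm y w"
  proof (rule antisym)
    show "band_norm y (c *\<^sub>R w) \<le> c * band_norm y w"
    proof (rule band_norm_le)
      fix k :: real assume "0 < k"
      then show "norm (inf (lat_abs (c *\<^sub>R w)) (k *\<^sub>R y)) \<le> c * band_norm y w"
        using norm_inf_le_band_norm[OF y, of "k / c" w] c by (simp add: norm_inf_lat_abs_scaleR)
    qed
    have "band_norm y w \<le> band_norm y (c *\<^sub>R w) / c"
    proof (rule band_norm_le)
      fix k :: real assume "0 < k"
      then show "norm (inf (lat_abs w) (k *\<^sub>R y)) \<le> band_norm y (c *\<^sub>R w) / c"
        using norm_inf_le_band_norm[OF y, of "c * k" "c *\<^sub>R w"] c
        by (simp add: norm_inf_lat_abs_scaleR field_simps)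
    qed
    then show "c * band_norm y w \<le> band_norm y (c *\<^sub>R w)"
      using c by (simp add: field_simps)
  qed
qed

lemma band_norm_norming_functional:
  fixes y w :: "'a::banach_lattice"
  assumes "0 \<le> y" "y \<le> lat_abs w"
  shows "\<exists>\<phi>. bounded_linear \<phi> \<and> (\<forall>v. \<bar>\<phi> v\<bar> \<le> band_norm y v) \<and> norm y \<le> \<phi> w"
proof -
  obtain \<phi> where "linear \<phi>" and le: "\<And>v. \<phi> v \<le> band_norm y v" and "\<phi> w = band_norm y w"
    using sublinear_supporting_linear[OF sublinear_band_norm[OF \<open>0 \<le> y\<close>]] by blast
  have abs_le: "\<bar>\<phi> v\<bar> \<le> band_norm y v" for v
    using le[of v] le[of "- v"] linear_neg[OF \<open>linear \<phi>\<close>, of v] by simp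
  have "bounded_linear \<phi>"
  proof (rule bounded_linear_intro[where K = 1])
    show "\<phi> (u + v) = \<phi> u + \<phi> v" "\<phi> (r *\<^sub>R u) = r *\<^sub>R \<phi> u" for r u v
      using \<open>linear \<phi>\<close> by (simp_all add: linear_add linear_scale)
    show "norm (\<phi> u) \<le> norm u * 1" for u
      using abs_le[of u] band_norm_le_norm[OF \<open>0 \<le> y\<close>, of u] by simp
  qed
  moreover have "norm y \<le> \<phi> w"
    using norm_le_band_norm[OF assms] \<open>\<phi> w = band_norm y w\<close> by simp
  ultimately show ?thesis
    using abs_le by blast
qed

lemma band_norm_disjoint_tendsto_zero:
  fixes y :: "nat \<Rightarrow> 'a::banach_lattice"
  assumes "lwc_set {u}" "lat_abs v \<le> u" and y: "\<And>n. 0 \<le> y n" "disjoint_seq y"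
  shows "(\<lambda>n. band_norm (y n) v) \<longlonglongrightarrow> 0"
proof -
  have "\<forall>n. \<exists>k. 0 < k \<and> band_norm (y n) v \<le> 2 * norm (inf (lat_abs v) (k *\<^sub>R y n))"
    using band_norm_nearly_attained[OF y(1)] by blast
  then obtain k where k: "\<And>n. 0 < k n"
    and approx: "\<And>n. band_norm (y n) v \<le> 2 * norm (inf (lat_abs v) (k n *\<^sub>R y n))"
    by metis
  define z where "z n = inf (lat_abs v) (k n *\<^sub>R y n)" for n
  have z_nonneg: "0 \<le> z n" for n
    unfolding z_def using k[of n] y(1)[of n] by (simp add: lat_abs_nonneg scaleR_nonneg_nonneg)
  have "z n \<in> sol {u}" for n
  proof -
    have "0 \<le> u"
      using lat_abs_nonneg order_trans \<open>lat_abs v \<le> u\<close> by blast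
    then have "- u \<le> z n"
      using z_nonneg[of n] by (meson neg_le_0_iff_le order_trans)
    moreover have "z n \<le> u"
      unfolding z_def using \<open>lat_abs v \<le> u\<close> by (rule le_infI1)
    ultimately show ?thesis
      unfolding sol_def using lat_abs_of_nonneg[OF \<open>0 \<le> u\<close>] by simp
  qed
  moreover have "disjoint_seq z"
    unfolding disjoint_seq_def lat_abs_of_nonneg[OF z_nonneg]
  proof (intro allI impI)
    fix n m :: nat assume "n \<noteq> m"
    then have "inf (y n) (y m) = 0"
      using y unfolding disjoint_seq_def by (simp add: lat_abs_of_nonneg)
    then show "inf (z n) (z m) = 0"
      by (rule inf_eq_0_if_le_scaleR[OF _ y(1) y(1) z_nonneg z_nonneg _ _ k[of n] k[of m]])
        (simp_all add: z_def)
  qed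
  ultimately have "(\<lambda>n. norm (z n)) \<longlonglongrightarrow> 0"
    using \<open>lwc_set {u}\<close> unfolding lwc_set_def by blast
  then have lim: "(\<lambda>n. 2 * norm (z n)) \<longlonglongrightarrow> 0"
    by (simp add: tendsto_mult_right_zero)
  have "\<forall>n. norm (band_norm (y n) v) \<le> 2 * norm (z n)"
    using approx band_norm_nonneg[OF y(1)] unfolding z_def by simp
  then show ?thesis
    by (rule Lim_null_comparison[OF always_eventually lim])
qed

section \<open>Limited sets and dominated operators\<close>

lemma positive_op_lat_abs_le:
  assumes "linear S" "positive_op S"
  shows "lat_abs (S x) \<le> S (lat_abs x)"
proof -
  have "0 \<le> lat_abs x - x" "0 \<le> lat_abs x - (- x)"
    by (simp_all only: diff_ge_0_iff_ge le_lat_abs minus_le_lat_abs)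
  then have "0 \<le> S (lat_abs x) - S x" "0 \<le> S (lat_abs x) - (- S x)"
    using assms(2) linear_diff[OF assms(1)] linear_neg[OF assms(1)]
    unfolding positive_op_def by metis+
  then show ?thesis
    unfolding lat_abs_le_iff diff_ge_0_iff_ge by blast
qed

lemma limited_set_singleton: "limited_set {v}"
  unfolding limited_set_def
proof (intro conjI allI impI)
  fix f :: "nat \<Rightarrow> 'a \<Rightarrow> real" and e :: real
  assume "weak_star_null f" "0 < e"
  then obtain N where "\<forall>n\<ge>N. norm (f n v - 0) < e"
    unfolding weak_star_null_def LIMSEQ_iff by blast
  then show "\<exists>N. \<forall>n\<ge>N. \<forall>a\<in>{v}. \<bar>f n a\<bar> < e"
    by auto
qed simp

lemma limited_set_weak_star_null_diagonal:
  assumes "limited_set A" "weak_star_null g" "\<And>n. a n \<in> A"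
  shows "(\<lambda>n. g n (a n)) \<longlonglongrightarrow> 0"
proof (rule LIMSEQ_I)
  fix r :: real assume "0 < r"
  then obtain N where "\<forall>n\<ge>N. \<forall>b\<in>A. \<bar>g n b\<bar> < r"
    using assms(1,2) unfolding limited_set_def by blast
  then show "\<exists>N. \<forall>n\<ge>N. norm (g n (a n) - 0) < r"
    using assms(3) by auto
qed

lemma sol_lat_abs_le: "x \<in> sol B \<Longrightarrow> \<exists>b\<in>B. lat_abs x \<le> lat_abs b"
  unfolding sol_def lat_abs_le_iff by (auto simp: minus_le_iff)

lemma lat_abs_le_dominating_op:
  assumes "linear S" "positive_op S" "positive_op (\<lambda>x. T x - S x)"
  shows "lat_abs (S x) \<le> T (lat_abs x)"
proof -
  have "S (lat_abs x) \<le> T (lat_abs x)"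
    using assms(3) lat_abs_nonneg[of x] unfolding positive_op_def by simp
  with positive_op_lat_abs_le[OF assms(1,2)] show ?thesis
    by (rule order_trans)
qed

lemma limitedly_L_weakly_compact_lwc_singleton:
  "limitedly_L_weakly_compact T \<Longrightarrow> lwc_set {T v}"
  using limited_set_singleton[of v] unfolding limitedly_L_weakly_compact_def by force

lemma weak_star_null_band_dominated:
  fixes S T :: "'a::banach_lattice \<Rightarrow> 'b::banach_lattice"
  assumes "bounded_linear S" "positive_op S" "positive_op (\<lambda>x. T x - S x)"
    and "limitedly_L_weakly_compact T"
    and "\<And>n. bounded_linear (\<phi> n)" and \<phi>_le: "\<And>n v. \<bar>\<phi> n v\<bar> \<le> band_norm (y n) v"
    and y: "\<And>n. 0 \<le> y n" "disjoint_seq y"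
  shows "weak_star_null (\<lambda>n e. \<phi> n (S e))"
  unfolding weak_star_null_def
proof (intro conjI allI)
  show "bounded_linear (\<lambda>e. \<phi> n (S e))" for n
    using bounded_linear_compose[OF assms(5) assms(1)] .
  fix e
  have "lat_abs (S e) \<le> T (lat_abs e)"
    using lat_abs_le_dominating_op[OF bounded_linear.linear[OF assms(1)] assms(2,3)] .
  with limitedly_L_weakly_compact_lwc_singleton[OF assms(4)]
  have "(\<lambda>n. band_norm (y n) (S e)) \<longlonglongrightarrow> 0"
    using band_norm_disjoint_tendsto_zero y by blast
  then show "(\<lambda>n. \<phi> n (S e)) \<longlonglongrightarrow> 0"
    by (rule Lim_null_comparison[OF always_eventually, rotated]) (simp add: \<phi>_le)
qed

theorem proposition3p1:
  fixes S T :: "'a::banach_lattice \<Rightarrow> 'b::banach_lattice"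
  assumes "bounded_linear S" and "bounded_linear T"
    and "positive_op S"
    and "positive_op (\<lambda>x. T x - S x)"
    and "limitedly_L_weakly_compact T"
  shows "limitedly_L_weakly_compact S"
  unfolding limitedly_L_weakly_compact_def lwc_set_def
proof (intro allI impI, elim conjE)
  fix A and x :: "nat \<Rightarrow> 'b"
  assume A: "limited_set A" and x: "\<forall>n. x n \<in> sol (S ` A)" "disjoint_seq x"
  define y where "y n = lat_abs (x n)" for n
  have y: "\<And>n. 0 \<le> y n" "disjoint_seq y"
    using x(2) unfolding y_def disjoint_seq_def by (simp_all add: lat_abs_nonneg)
  have "\<forall>n. \<exists>a\<in>A. y n \<le> lat_abs (S a)"
    using x(1) sol_lat_abs_le unfolding y_def by blast
  then obtain a where a: "\<And>n. a n \<in> A" "\<And>n. y n \<le> lat_abs (S (a n))"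
    by metis
  have "\<forall>n. \<exists>\<phi>. bounded_linear \<phi> \<and> (\<forall>v. \<bar>\<phi> v\<bar> \<le> band_norm (y n) v) \<and> norm (y n) \<le> \<phi> (S (a n))"
    using band_norm_norming_functional[OF y(1) a(2)] by blast
  then obtain \<phi> where \<phi>: "\<And>n. bounded_linear (\<phi> n)" "\<And>n v. \<bar>\<phi> n v\<bar> \<le> band_norm (y n) v"
    and norming: "\<And>n. norm (y n) \<le> \<phi> n (S (a n))"
    by metis
  have "weak_star_null (\<lambda>n e. \<phi> n (S e))"
    using weak_star_null_band_dominated[OF assms(1,3,4,5) \<phi> y] .
  with A have "(\<lambda>n. \<phi> n (S (a n))) \<longlonglongrightarrow> 0"
    using a(1) by (rule limited_set_weak_star_null_diagonal)
  then show "(\<lambda>n. norm (x n)) \<longlonglongrightarrow> 0"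
    by (rule Lim_null_comparison[OF always_eventually, rotated])
      (simp add: norming[unfolded y_def, simplified])
qed

end
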